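(* Let $p\ge3$ be a prime, let $c>0$, let $M=\lceil 2p^2\log p/(c\pi^2)\rceil$, and let $D$ be a probability distribution on $\mathbb{F}_p$ such that $D(x)\le1-c$ for each $x\in\mathbb{F}_p$. If $A\subset\mathbb{F}_p^n$ has density $\epsilon$ with respect to $D^n$, then the sumset $(p-1)MA$ has density at least $\epsilon^{(p-1)M}$ inside $\mathbb{F}_p^n$ with respect to the uniform distribution on $\mathbb{F}_p^n$.
   Context: $D^n$ is the distribution on $\mathbb{F}_p^n$ whose coordinates are independent with distribution $D$; the density of $A$ with respect to a distribution $\mu$ is $\sum_{x\in A}\mu(x)$. For a positive integer $K$, $KA=\{a_1+\dots+a_K:a_i\in A\}$ is the $K$-fold sumset. *)

theory Defs
  imports Complex_Main "HOL-Library.FuncSet" "HOL-Computational_Algebra.Primes"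
begin

text \<open>F_p is modelled as {0..<p} with arithmetic mod p; F_p^n as the extensional
functions {0..<n} -> {0..<p}.\<close>

definition Fp_vecs :: "nat \<Rightarrow> nat \<Rightarrow> (nat \<Rightarrow> nat) set" where
  "Fp_vecs p n = ({..<n} \<rightarrow>\<^sub>E {..<p})"

definition vadd :: "nat \<Rightarrow> nat \<Rightarrow> (nat \<Rightarrow> nat) \<Rightarrow> (nat \<Rightarrow> nat) \<Rightarrow> (nat \<Rightarrow> nat)" where
  "vadd p n x y = (\<lambda>i\<in>{..<n}. (x i + y i) mod p)"

definition vzero :: "nat \<Rightarrow> (nat \<Rightarrow> nat)" where
  "vzero n = (\<lambda>i\<in>{..<n}. 0)"

primrec ksumset :: "nat \<Rightarrow> nat \<Rightarrow> nat \<Rightarrow> (nat \<Rightarrow> nat) set \<Rightarrow> (nat \<Rightarrow> nat) set" where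
  "ksumset p n 0 A = {vzero n}"
| "ksumset p n (Suc K) A = {vadd p n a b | a b. a \<in> A \<and> b \<in> ksumset p n K A}"

definition prod_density :: "nat \<Rightarrow> (nat \<Rightarrow> real) \<Rightarrow> (nat \<Rightarrow> nat) set \<Rightarrow> real" where
  "prod_density n D A = (\<Sum>x\<in>A. \<Prod>i<n. D (x i))"

definition unif_density :: "nat \<Rightarrow> nat \<Rightarrow> (nat \<Rightarrow> nat) set \<Rightarrow> real" where
  "unif_density p n A = real (card A) / real p ^ n"

end

theory Submission
  imports Defs "HOL-Analysis.Analysis" "HOL-Number_Theory.Cong"
begin

text \<open>
  The bound card (A_1 + ... + A_K) >= p^n * prod_i D^n(A_i) (used with all A_i = A) is proved by
  induction on n, fibring over the last coordinate. This reduces it to a one-dimensional functional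
  inequality on F_p: if H(t_1 + ... + t_K) >= prod_i g_i(t_i) for all t, then
  sum_s H(s) >= p * prod_i E_D g_i.

  In dimension one, let g_i attain its largest value m_i at ts_i and its second largest value
  m_i * rho_i at tp_i. Since D gives mass at most 1 - c to ts_i, E_D g_i <= m_i (1 - c (1 - rho_i)).
  In each of p - 1 blocks of M consecutive indices keep the index with the largest rho_i.
  Moving g_i from ts_i to tp_i at the kept indices in a set S costs the factor prod_S rho, and
  these moves reach every residue, because the subset sums of p - 1 nonzero residues cover F_p.
  The choice of M gives (1 - c (1 - rho))^M <= max rho (1/p). If this maximum is rho for every
  kept index, every residue receives the full product; otherwise one factor 1/p pays for using a
  single residue.
\<close>

lemma ln_ge_chord:
  fixes a b :: real
  assumes "0 < a" "a \<le> b" "b \<le> 1" "a < 1"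
  shows "(1 - b) / (1 - a) * ln a \<le> ln b"
proof -
  define u where "u = (1 - b) / (1 - a)"
  have u: "0 \<le> u" "u \<le> 1" using assms by (auto simp: u_def divide_simps)
  have "u * (1 - a) = 1 - b" using assms by (simp add: u_def)
  then have "b = u * a + (1 - u) * 1" by (simp add: algebra_simps)
  moreover have "u * ln a + (1 - u) * ln 1 \<le> ln (u * a + (1 - u) * 1)"
    using ln_concave[unfolded concave_on_iff, THEN conjunct2, rule_format, of a 1 u "1 - u"] assms u
    by simp
  ultimately show ?thesis by (simp add: u_def)
qed

lemma exp_le_max_inverse:
  fixes x L b :: real
  assumes "1 < x" "x * ln x \<le> (x - 1) * L" "0 \<le> b" "b \<le> 1"
  shows "exp (- L * (1 - b)) \<le> max b (1 / x)"
proof -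
  have ln_le: "ln x \<le> L * (1 - 1 / x)"
    using assms(1,2) by (simp add: field_simps)
  have "0 < ln x" "0 < 1 - 1 / x" using assms(1) by auto
  then have L0: "0 \<le> L" using ln_le by (smt (verit) mult_nonpos_nonneg)
  have at_inverse: "exp (- L * (1 - 1 / x)) \<le> 1 / x"
  proof -
    have "exp (- L * (1 - 1 / x)) \<le> exp (- ln x)" using ln_le by simp
    also have "\<dots> = 1 / x" using assms(1) by (simp add: exp_minus inverse_eq_divide)
    finally show ?thesis .
  qed
  \<comment> \<open>ln b + L (1 - b) is concave in b and nonnegative at b = 1 / x and at b = 1.\<close>
  show ?thesis
  proof (cases "1 / x \<le> b")
    case True
    have "(1 - b) / (1 - 1 / x) * ln (1 / x) \<le> ln b"
      using True assms by (intro ln_ge_chord) auto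
    moreover have "(1 - b) / (1 - 1 / x) * ln (1 / x) \<ge> - L * (1 - b)"
    proof -
      have "(1 - b) / (1 - 1 / x) * ln x \<le> (1 - b) / (1 - 1 / x) * (L * (1 - 1 / x))"
        using ln_le assms(1,4) by (intro mult_left_mono) auto
      then show ?thesis using assms(1) by (simp add: ln_div mult.commute)
    qed
    ultimately have "exp (- L * (1 - b)) \<le> exp (ln b)" by simp
    moreover have "0 < b" using True assms(1) by (smt (verit) divide_pos_pos)
    ultimately show ?thesis by simp
  next
    case False
    then have "exp (- L * (1 - b)) \<le> exp (- L * (1 - 1 / x))"
      using L0 by (simp add: mult_left_mono)
    then show ?thesis using at_inverse by linarith
  qed
qed

lemma power_affine_le_max_inverse:
  fixes p M :: nat and c b :: real
  assumes p: "3 \<le> p" and c: "0 < c" "c \<le> 1"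
    and M: "M = nat \<lceil>2 * real p ^ 2 * ln (real p) / (c * pi ^ 2)\<rceil>"
    and b: "0 \<le> b" "b \<le> 1"
  shows "(1 - c * (1 - b)) ^ M \<le> max b (1 / real p)"
proof -
  have "0 \<le> 1 - c * (1 - b)" using mult_mono[of c 1 "1 - b" 1] b c by simp
  then have "(1 - c * (1 - b)) ^ M \<le> exp (- c * (1 - b)) ^ M"
    using exp_ge_add_one_self[of "- c * (1 - b)"] by (intro power_mono) auto
  also have "\<dots> = exp (- (c * M) * (1 - b))" by (simp flip: exp_of_nat_mult)
  also have "\<dots> \<le> max b (1 / real p)"
  proof (rule exp_le_max_inverse)
    \<comment> \<open>This is what the choice of M is for.\<close>
    have "pi ^ 2 \<le> 12"
      using pi_approx power_mono[of pi "16 / 5" 2] by (simp add: power2_eq_square)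
    moreover have "12 \<le> 2 * real p * (real p - 1)"
      using mult_mono[of 3 "real p" 2 "real p - 1"] p by simp
    ultimately have "1 \<le> 2 * real p * (real p - 1) / pi ^ 2" by simp
    then have "real p * ln (real p) * 1 \<le> real p * ln (real p) * (2 * real p * (real p - 1) / pi ^ 2)"
      using p by (intro mult_left_mono) auto
    also have "\<dots> = (real p - 1) * (2 * real p ^ 2 * ln (real p) / (c * pi ^ 2)) * c"
      using c by (simp add: field_simps power2_eq_square)
    also have "\<dots> \<le> (real p - 1) * real M * c"
      using M p c real_nat_ceiling_ge by (intro mult_right_mono mult_left_mono) auto
    finally show "real p * ln (real p) \<le> (real p - 1) * (c * M)" by (simp add: ac_simps)
  qed (use p b in auto)
  finally show ?thesis .
qed

section \<open>Subset sums modulo a prime\<close>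

definition subset_sums_mod :: "nat \<Rightarrow> (nat \<Rightarrow> int) \<Rightarrow> nat \<Rightarrow> int set" where
  "subset_sums_mod p d m = {(\<Sum>j\<in>S. d j) mod int p | S. S \<subseteq> {..<m}}"

lemma subset_sums_mod_subset: "0 < p \<Longrightarrow> subset_sums_mod p d m \<subseteq> {0..<int p}"
  unfolding subset_sums_mod_def by auto

lemma finite_subset_sums_mod: "0 < p \<Longrightarrow> finite (subset_sums_mod p d m)"
  by (rule finite_subset[OF subset_sums_mod_subset]) auto

lemma subset_sums_modI: "S \<subseteq> {..<m} \<Longrightarrow> (\<Sum>j\<in>S. d j) mod int p \<in> subset_sums_mod p d m"
  unfolding subset_sums_mod_def by auto

lemma zero_in_subset_sums_mod: "0 \<in> subset_sums_mod p d m"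
  using subset_sums_modI[of "{}"] by simp

lemma subset_sums_mod_Suc:
  assumes "x \<in> subset_sums_mod p d m"
  shows "x \<in> subset_sums_mod p d (Suc m)" "(x + d m) mod int p \<in> subset_sums_mod p d (Suc m)"
proof -
  obtain S where S: "S \<subseteq> {..<m}" "x = (\<Sum>j\<in>S. d j) mod int p"
    using assms unfolding subset_sums_mod_def by auto
  then have S': "S \<subseteq> {..<Suc m}" "insert m S \<subseteq> {..<Suc m}" "m \<notin> S" by auto
  then show "x \<in> subset_sums_mod p d (Suc m)" using S(2) subset_sums_modI[OF S'(1)] by simp
  have "(\<Sum>j\<in>insert m S. d j) = d m + (\<Sum>j\<in>S. d j)" using S' finite_subset[OF S(1)] by simp
  then have "(x + d m) mod int p = (\<Sum>j\<in>insert m S. d j) mod int p"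
    using S(2) by (simp add: mod_add_right_eq add.commute)
  then show "(x + d m) mod int p \<in> subset_sums_mod p d (Suc m)"
    using subset_sums_modI[OF S'(2)] by simp
qed

lemma residues_subset_if_translation_closed:
  assumes p: "prime p" and e: "\<not> int p dvd e"
    and closed: "\<And>x. x \<in> R \<Longrightarrow> (x + e) mod int p \<in> R" and "0 \<in> R"
  shows "{0..<int p} \<subseteq> R"
proof
  fix r assume r: "r \<in> {0..<int p}"
  have multiples: "(int k * e) mod int p \<in> R" for k
  proof (induction k)
    case (Suc k)
    have "(int (Suc k) * e) mod int p = ((int k * e) mod int p + e) mod int p"
      by (simp add: algebra_simps mod_add_right_eq)
    then show ?case using closed[OF Suc] by simp
  qed (simp add: \<open>0 \<in> R\<close>)
  have "coprime e (int p)"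
    using p e by (metis coprime_commute prime_imp_coprime prime_nat_int_transfer)
  then obtain y where y: "[e * y = 1] (mod int p)" using cong_solve_coprime_int by blast
  define k where "k = nat ((y * r) mod int p)"
  have "int k = (y * r) mod int p" using p prime_gt_0_nat by (simp add: k_def)
  then have "(int k * e) mod int p = ((e * y) * r) mod int p"
    by (simp add: mod_mult_right_eq ac_simps)
  also have "\<dots> = r mod int p" using cong_scalar_right[OF y, of r] by (simp add: cong_def)
  also have "\<dots> = r" using r by simp
  finally show "r \<in> R" using multiples[of k] by simp
qed

lemma card_subset_sums_mod_ge:
  assumes p: "prime p" and d: "\<forall>j<m. \<not> int p dvd d j"
  shows "min p (m + 1) \<le> card (subset_sums_mod p d m)"
  using d
proof (induction m)
  case 0
  have "subset_sums_mod p d 0 = {0}" unfolding subset_sums_mod_def by auto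
  then show ?case by simp
next
  case (Suc m)
  have p0: "0 < p" using p prime_gt_0_nat by simp
  have IH: "min p (m + 1) \<le> card (subset_sums_mod p d m)" using Suc by auto
  have dm: "\<not> int p dvd d m" using Suc.prems by simp
  have grow: "card (subset_sums_mod p d m) \<le> card (subset_sums_mod p d (Suc m))"
    using subset_sums_mod_Suc(1) finite_subset_sums_mod[OF p0] by (intro card_mono) auto
  show ?case
  proof (cases "p \<le> card (subset_sums_mod p d m)")
    case True
    then show ?thesis using grow by simp
  next
    case False
    have "\<not> {0..<int p} \<subseteq> subset_sums_mod p d m"
    proof
      assume "{0..<int p} \<subseteq> subset_sums_mod p d m"
      then have "card {0..<int p} \<le> card (subset_sums_mod p d m)"
        by (intro card_mono finite_subset_sums_mod p0)
      then show False using False by simp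
    qed
    then obtain x where x: "x \<in> subset_sums_mod p d m" "(x + d m) mod int p \<notin> subset_sums_mod p d m"
      using residues_subset_if_translation_closed[OF p dm, of "subset_sums_mod p d m"]
        zero_in_subset_sums_mod by blast
    have "insert ((x + d m) mod int p) (subset_sums_mod p d m) \<subseteq> subset_sums_mod p d (Suc m)"
      using subset_sums_mod_Suc[OF x(1)] subset_sums_mod_Suc(1) by blast
    then have "card (insert ((x + d m) mod int p) (subset_sums_mod p d m))
        \<le> card (subset_sums_mod p d (Suc m))"
      by (intro card_mono finite_subset_sums_mod p0)
    then have "Suc (card (subset_sums_mod p d m)) \<le> card (subset_sums_mod p d (Suc m))"
      using x(2) finite_subset_sums_mod[OF p0] by simp
    then show ?thesis using IH by linarith
  qed
qed

lemma subset_sums_cover_residues: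
  assumes p: "prime p" and d: "\<forall>j<p - 1. \<not> int p dvd d j"
  shows "\<exists>S\<subseteq>{..<p - 1}. [(\<Sum>j\<in>S. d j) = r] (mod int p)"
proof -
  have p0: "0 < p" using p prime_gt_0_nat by simp
  have "card {0..<int p} \<le> card (subset_sums_mod p d (p - 1))"
    using card_subset_sums_mod_ge[OF p d] p0 by simp
  then have "subset_sums_mod p d (p - 1) = {0..<int p}"
    using subset_sums_mod_subset[OF p0] by (intro card_seteq) auto
  then have "r mod int p \<in> subset_sums_mod p d (p - 1)" using p0 by simp
  then obtain S where "S \<subseteq> {..<p - 1}" "(\<Sum>j\<in>S. d j) mod int p = r mod int p"
    unfolding subset_sums_mod_def by auto
  then show ?thesis unfolding cong_def by blast
qed

section \<open>The one-dimensional inequality\<close>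

lemma ex_maximizer:
  fixes f :: "'a \<Rightarrow> 'b::linorder"
  assumes "finite S" "S \<noteq> {}"
  shows "\<exists>x\<in>S. \<forall>y\<in>S. f y \<le> f x"
proof -
  have "Max (f ` S) \<in> f ` S" using assms by (intro Max_in) auto
  then obtain x where x: "x \<in> S" "f x = Max (f ` S)" by auto
  have "f y \<le> f x" if "y \<in> S" for y
    unfolding x(2) using assms(1) that by (intro Max_ge) auto
  then show ?thesis using x(1) by blast
qed

lemma prod_le_prod_subset:
  fixes f :: "'a \<Rightarrow> real"
  assumes "finite A" "S \<subseteq> A" "\<forall>i\<in>A. 0 \<le> f i \<and> f i \<le> 1"
  shows "prod f A \<le> prod f S"
proof -
  have "prod f A = prod f S * prod f (A - S)"
    using assms by (metis prod.subset_diff mult.commute)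
  moreover have "prod f (A - S) \<le> 1" "0 \<le> prod f S"
    using assms by (auto intro!: prod_le_1 prod_nonneg)
  ultimately show ?thesis by (simp add: mult_left_le)
qed

lemma sum_if_mem_eq:
  fixes f g :: "'a \<Rightarrow> 'b::ab_group_add"
  assumes "finite I" "J \<subseteq> I"
  shows "(\<Sum>i\<in>I. if i \<in> J then f i else g i) = (\<Sum>i\<in>I. g i) + (\<Sum>i\<in>J. f i - g i)"
proof -
  have "(\<Sum>i\<in>I. if i \<in> J then f i else g i) = (\<Sum>i\<in>I. g i + (if i \<in> J then f i - g i else 0))"
    by (intro sum.cong) auto
  also have "\<dots> = (\<Sum>i\<in>I. g i) + (\<Sum>i\<in>I \<inter> J. f i - g i)"
    using assms(1) by (simp add: sum.distrib sum.inter_restrict)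
  finally show ?thesis using assms(2) by (simp add: Int_absorb1)
qed

lemma prod_if_mem_eq:
  fixes f g \<rho> :: "'a \<Rightarrow> 'b::comm_monoid_mult"
  assumes "finite I" "J \<subseteq> I" "\<And>i. i \<in> J \<Longrightarrow> f i = g i * \<rho> i"
  shows "(\<Prod>i\<in>I. if i \<in> J then f i else g i) = (\<Prod>i\<in>I. g i) * (\<Prod>i\<in>J. \<rho> i)"
proof -
  have "(\<Prod>i\<in>I. if i \<in> J then f i else g i) = (\<Prod>i\<in>I. g i * (if i \<in> J then \<rho> i else 1))"
    using assms(3) by (intro prod.cong) auto
  also have "\<dots> = (\<Prod>i\<in>I. g i) * (\<Prod>i\<in>I \<inter> J. \<rho> i)"
    using assms(1) by (simp add: prod.distrib prod.inter_restrict)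
  finally show ?thesis using assms(2) by (simp add: Int_absorb1)
qed

lemma prod_le_prod_block_max_power:
  fixes w :: "nat \<Rightarrow> real"
  assumes M: "0 < M" and w: "\<forall>i<k * M. 0 \<le> w i"
  obtains ib where "inj_on ib {..<k}" "ib ` {..<k} \<subseteq> {..<k * M}"
    "(\<Prod>i<k * M. w i) \<le> (\<Prod>j<k. w (ib j) ^ M)"
proof -
  let ?block = "\<lambda>j. {j * M..<j * M + M}"
  have "\<exists>i\<in>?block j. \<forall>i'\<in>?block j. w i' \<le> w i" for j
    using M by (intro ex_maximizer) auto
  then obtain ib where ib: "\<And>j. ib j \<in> ?block j" "\<And>j i. i \<in> ?block j \<Longrightarrow> w i \<le> w (ib j)"
    by metis
  have block_lt: "i < k * M" if "i \<in> ?block j" "j < k" for i j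
  proof -
    have "j * M + M \<le> k * M" using that(2) by (metis add.commute mult_Suc mult_le_mono1 Suc_leI)
    then show ?thesis using that(1) by simp
  qed
  show ?thesis
  proof
    have "ib j div M = j" for j using ib(1)[of j] by (intro div_nat_eqI) (auto simp: mult.commute)
    then show "inj_on ib {..<k}" by (metis inj_onI)
    show "ib ` {..<k} \<subseteq> {..<k * M}" using ib(1) block_lt by blast
    have "(\<Prod>i<k * M. w i) = (\<Prod>j<k. \<Prod>i\<in>?block j. w i)" by (rule prod.nat_group[symmetric])
    also have "\<dots> \<le> (\<Prod>j<k. w (ib j) ^ M)"
    proof (rule prod_mono)
      fix j assume "j \<in> {..<k}"
      then have "\<forall>i\<in>?block j. 0 \<le> w i \<and> w i \<le> w (ib j)" using ib(2) w block_lt by auto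
      then have "0 \<le> (\<Prod>i\<in>?block j. w i)" "(\<Prod>i\<in>?block j. w i) \<le> (\<Prod>i\<in>?block j. w (ib j))"
        by (intro prod_nonneg prod_mono; auto)+
      then show "0 \<le> (\<Prod>i\<in>?block j. w i) \<and> (\<Prod>i\<in>?block j. w i) \<le> w (ib j) ^ M" by simp
    qed
    finally show "(\<Prod>i<k * M. w i) \<le> (\<Prod>j<k. w (ib j) ^ M)" .
  qed
qed

lemma exists_top_two_ratio_bound:
  fixes D g :: "nat \<Rightarrow> real"
  assumes p: "2 \<le> p" and D0: "\<forall>t<p. 0 \<le> D t" and D1: "(\<Sum>t<p. D t) = 1"
    and Dc: "\<forall>t<p. D t \<le> 1 - c" and g0: "\<forall>t<p. 0 \<le> g t"
  shows "\<exists>z y \<rho>. z < p \<and> y < p \<and> y \<noteq> z \<and> 0 \<le> g z \<and> 0 \<le> \<rho> \<and> \<rho> \<le> 1 \<and> g y = g z * \<rho> \<and>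
    (\<Sum>t<p. D t * g t) \<le> g z * (1 - c * (1 - \<rho>))"
proof -
  have "0 \<in> {..<p}" using p by simp
  then obtain z where z: "z < p" "\<forall>t<p. g t \<le> g z"
    using ex_maximizer[of "{..<p}" g] by blast
  have "(if z = 0 then 1 else 0) \<in> {..<p} - {z}" using p by auto
  then have "{..<p} - {z} \<noteq> {}" by blast
  then obtain y where y: "y < p" "y \<noteq> z" "\<forall>t<p. t \<noteq> z \<longrightarrow> g t \<le> g y"
    using ex_maximizer[of "{..<p} - {z}" g] by auto
  define \<rho> where "\<rho> = g y / g z"
  have gy: "0 \<le> g y" "g y \<le> g z" using y z g0 by auto
  then have \<rho>: "0 \<le> \<rho>" "\<rho> \<le> 1" "g y = g z * \<rho>" by (auto simp: \<rho>_def divide_simps)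
  have "(\<Sum>t<p. D t * g t) = D z * g z + (\<Sum>t\<in>{..<p} - {z}. D t * g t)"
    using z by (simp add: sum.remove)
  also have "\<dots> \<le> D z * g z + (\<Sum>t\<in>{..<p} - {z}. D t) * g y"
    using y D0 by (auto simp: sum_distrib_right intro!: sum_mono mult_left_mono)
  also have "(\<Sum>t\<in>{..<p} - {z}. D t) = 1 - D z"
    using z D1 by (simp add: sum_diff1)
  also have "D z * g z + (1 - D z) * g y \<le> (1 - c) * g z + c * g y"
    using mult_right_mono[of "D z" "1 - c" "g z - g y"] Dc gy z by (simp add: algebra_simps)
  also have "\<dots> = g z * (1 - c * (1 - \<rho>))" using \<rho>(3) by (simp add: algebra_simps)
  finally have "(\<Sum>t<p. D t * g t) \<le> g z * (1 - c * (1 - \<rho>))" .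
  moreover have "0 \<le> g z" using g0 z(1) by blast
  ultimately show ?thesis using y(1,2) z(1) \<rho> by blast
qed

lemma top_two_ratio_bounds:
  fixes D :: "nat \<Rightarrow> real" and g :: "nat \<Rightarrow> nat \<Rightarrow> real"
  assumes "2 \<le> p" "\<forall>t<p. 0 \<le> D t" "(\<Sum>t<p. D t) = 1" "\<forall>t<p. D t \<le> 1 - c"
    and "\<forall>i<K. \<forall>t<p. 0 \<le> g i t"
  obtains ts tp \<rho> where "\<forall>i<K. ts i < p \<and> tp i < p \<and> tp i \<noteq> ts i \<and> 0 \<le> g i (ts i) \<and>
    0 \<le> \<rho> i \<and> \<rho> i \<le> 1 \<and> g i (tp i) = g i (ts i) * \<rho> i \<and>
    (\<Sum>t<p. D t * g i t) \<le> g i (ts i) * (1 - c * (1 - \<rho> i))"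
proof -
  \<comment> \<open>Hiding the conjunction in a predicate lets metis find the choice functions.\<close>
  define top_two where "top_two i z y r \<longleftrightarrow> z < p \<and> y < p \<and> y \<noteq> z \<and> 0 \<le> g i z \<and>
    0 \<le> r \<and> r \<le> 1 \<and> g i y = g i z * r \<and> (\<Sum>t<p. D t * g i t) \<le> g i z * (1 - c * (1 - r))"
    for i z y r
  have "\<exists>z y r. top_two i z y r" if "i < K" for i
    unfolding top_two_def using exists_top_two_ratio_bound[of p D c "g i"] assms that by simp
  then obtain ts tp \<rho> where "\<forall>i<K. top_two i (ts i) (tp i) (\<rho> i)" by metis
  moreover note that[of ts tp \<rho>]
  ultimately show ?thesis by (simp add: top_two_def)
qed

lemma prod_le_small_factor_mult_prod:
  fixes \<beta> b :: "'a \<Rightarrow> real"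
  assumes "finite A" "T \<subseteq> A" "j0 \<in> A - T" "\<forall>j\<in>A. 0 \<le> \<beta> j \<and> \<beta> j \<le> 1"
    and "\<forall>j\<in>T. \<beta> j \<le> b j" "\<beta> j0 \<le> \<epsilon>"
  shows "prod \<beta> A \<le> \<epsilon> * prod b T"
proof -
  have "prod \<beta> A = prod \<beta> (A - T) * prod \<beta> T" by (rule prod.subset_diff[OF assms(2,1)])
  also have "\<dots> \<le> \<epsilon> * prod b T"
  proof (rule mult_mono)
    have "prod \<beta> (A - T) \<le> prod \<beta> {j0}" using assms(1-4) by (intro prod_le_prod_subset) auto
    then show "prod \<beta> (A - T) \<le> \<epsilon>" using assms(6) by simp
    show "prod \<beta> T \<le> prod b T" using assms(2,4,5) by (intro prod_mono) auto
    show "0 \<le> \<epsilon>" using assms(3,4,6) by force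
    show "0 \<le> prod \<beta> T" using assms(2,4) by (intro prod_nonneg) auto
  qed
  finally show ?thesis .
qed

lemma sum_ge_of_subset_bounds:
  fixes H b \<beta> :: "nat \<Rightarrow> real" and w :: "nat set \<Rightarrow> nat"
  assumes surj: "\<forall>s<p. \<exists>S\<subseteq>{..<k}. w S = s" and w_lt: "\<forall>S\<subseteq>{..<k}. w S < p"
    and H: "\<forall>S\<subseteq>{..<k}. C * (\<Prod>j\<in>S. b j) \<le> H (w S)" and C: "0 \<le> C"
    and b: "\<forall>j<k. 0 \<le> b j \<and> b j \<le> 1"
    and \<beta>: "\<forall>j<k. 0 \<le> \<beta> j \<and> \<beta> j \<le> max (b j) (1 / real p)"
  shows "real p * C * (\<Prod>j<k. \<beta> j) \<le> (\<Sum>s<p. H s)"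
proof -
  have p: "0 < p" using w_lt[rule_format, of "{}"] by simp
  have H_ge: "C * (\<Prod>j\<in>S. b j) \<le> H (w S)" if "S \<subseteq> {..<k}" for S
    using H that by blast
  have bound_nonneg: "0 \<le> C * (\<Prod>j\<in>S. b j)" if "S \<subseteq> {..<k}" for S
    using that b C by (intro mult_nonneg_nonneg prod_nonneg) auto
  have H0: "0 \<le> H s" if s: "s < p" for s
  proof -
    obtain S where S: "S \<subseteq> {..<k}" "w S = s" using surj s by blast
    then have "0 \<le> H (w S)" using H_ge[of S] bound_nonneg[of S] by linarith
    then show ?thesis using S(2) by simp
  qed
  have \<beta>1: "\<forall>j<k. 0 \<le> \<beta> j \<and> \<beta> j \<le> 1"
  proof (intro allI impI)
    fix j assume "j < k"
    moreover have "1 / real p \<le> 1" using p by simp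
    ultimately have "max (b j) (1 / real p) \<le> 1" using b by simp
    moreover have "0 \<le> \<beta> j" "\<beta> j \<le> max (b j) (1 / real p)" using \<beta> \<open>j < k\<close> by auto
    ultimately show "0 \<le> \<beta> j \<and> \<beta> j \<le> 1" by linarith
  qed
  show ?thesis
  proof (cases "\<forall>j<k. \<beta> j \<le> b j")
    case True
    have "C * (\<Prod>j<k. \<beta> j) \<le> H s" if s: "s < p" for s
    proof -
      obtain S where S: "S \<subseteq> {..<k}" "w S = s" using surj s by blast
      have "(\<Prod>j<k. \<beta> j) \<le> (\<Prod>j<k. b j)" using True \<beta>1 by (intro prod_mono) auto
      also have "\<dots> \<le> (\<Prod>j\<in>S. b j)" using S b by (intro prod_le_prod_subset) auto
      finally have "C * (\<Prod>j<k. \<beta> j) \<le> C * (\<Prod>j\<in>S. b j)" using C by (rule mult_left_mono)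
      also have "\<dots> \<le> H s" using H_ge[OF S(1)] S(2) by simp
      finally show ?thesis .
    qed
    then have "(\<Sum>s<p. C * (\<Prod>j<k. \<beta> j)) \<le> (\<Sum>s<p. H s)" by (intro sum_mono) auto
    then show ?thesis by simp
  next
    case False
    then obtain j0 where j0: "j0 < k" "b j0 < \<beta> j0" by (auto simp: not_le)
    define T where "T = {j. j < k \<and> \<beta> j \<le> b j}"
    have T: "T \<subseteq> {..<k}" by (auto simp: T_def)
    have "\<beta> j0 \<le> max (b j0) (1 / real p)" using \<beta> j0(1) by blast
    then have "\<beta> j0 \<le> 1 / real p" using j0(2) by (auto simp: max_def split: if_splits)
    then have "(\<Prod>j<k. \<beta> j) \<le> 1 / real p * (\<Prod>j\<in>T. b j)"
      using \<beta>1 j0 by (intro prod_le_small_factor_mult_prod) (auto simp: T_def)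
    then have "real p * (\<Prod>j<k. \<beta> j) \<le> (\<Prod>j\<in>T. b j)"
      using p by (simp add: field_simps)
    from mult_left_mono[OF this C]
    have "real p * C * (\<Prod>j<k. \<beta> j) \<le> C * (\<Prod>j\<in>T. b j)" by (simp add: ac_simps)
    also have "\<dots> \<le> H (w T)" using H_ge T by blast
    also have "\<dots> \<le> (\<Sum>s<p. H s)" using H0 w_lt T by (intro member_le_sum) auto
    finally show ?thesis .
  qed
qed

lemma switched_sums_cover_residues:
  fixes p K s :: nat and ts tp ib :: "nat \<Rightarrow> nat"
  assumes p: "prime p" and ts_tp: "\<forall>i<K. ts i < p \<and> tp i < p \<and> tp i \<noteq> ts i"
    and ib: "inj_on ib {..<p - 1}" "ib ` {..<p - 1} \<subseteq> {..<K}" and s: "s < p"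
  shows "\<exists>S\<subseteq>{..<p - 1}. (\<Sum>i<K. if i \<in> ib ` S then tp i else ts i) mod p = s"
proof -
  define \<delta> where "\<delta> j = int (tp (ib j)) - int (ts (ib j))" for j
  have "\<not> int p dvd \<delta> j" if "j < p - 1" for j
  proof
    assume dvd: "int p dvd \<delta> j"
    have "ib j < K" using ib(2) that by auto
    then have "\<delta> j \<noteq> 0" "\<bar>\<delta> j\<bar> < int p" using ts_tp by (auto simp: \<delta>_def abs_less_iff)
    then show False using dvd_imp_le_int[OF _ dvd] by simp
  qed
  then obtain S where S: "S \<subseteq> {..<p - 1}"
    "[(\<Sum>j\<in>S. \<delta> j) = int s - (\<Sum>i<K. int (ts i))] (mod int p)"
    using subset_sums_cover_residues[OF p] by blast
  have "int (\<Sum>i<K. if i \<in> ib ` S then tp i else ts i)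
      = (\<Sum>i<K. if i \<in> ib ` S then int (tp i) else int (ts i))"
    by (simp add: of_nat_sum if_distrib)
  also have "\<dots> = (\<Sum>i<K. int (ts i)) + (\<Sum>i\<in>ib ` S. int (tp i) - int (ts i))"
    using S(1) ib(2) by (intro sum_if_mem_eq) auto
  also have "(\<Sum>i\<in>ib ` S. int (tp i) - int (ts i)) = (\<Sum>j\<in>S. \<delta> j)"
    using inj_on_subset[OF ib(1) S(1)] by (simp add: sum.reindex \<delta>_def)
  finally have "[int (\<Sum>i<K. if i \<in> ib ` S then tp i else ts i) = int s] (mod int p)"
    using cong_add[OF cong_refl S(2), of "\<Sum>i<K. int (ts i)"] by simp
  then have "[(\<Sum>i<K. if i \<in> ib ` S then tp i else ts i) = s] (mod p)"
    by (simp only: cong_int_iff)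
  then have "(\<Sum>i<K. if i \<in> ib ` S then tp i else ts i) mod p = s"
    using s by (simp add: cong_def)
  then show ?thesis using S(1) by blast
qed

text \<open>In the induction on the dimension, H s is the normalised size of the fibre of the sumset
  over s.\<close>

definition fp_prekopa_leindler :: "nat \<Rightarrow> nat \<Rightarrow> (nat \<Rightarrow> real) \<Rightarrow> bool" where
  "fp_prekopa_leindler p K D \<longleftrightarrow>
    (\<forall>g H. (\<forall>i<K. \<forall>t<p. 0 \<le> g i t) \<longrightarrow>
      (\<forall>t. (\<forall>i<K. t i < p) \<longrightarrow> (\<Prod>i<K. g i (t i)) \<le> H ((\<Sum>i<K. t i) mod p)) \<longrightarrow>
      real p * (\<Prod>i<K. \<Sum>t<p. D t * g i t) \<le> (\<Sum>s<p. H s))"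

lemma sum_ge_of_switching:
  fixes p K :: nat and ts tp ib :: "nat \<Rightarrow> nat"
    and g :: "nat \<Rightarrow> nat \<Rightarrow> real" and H \<rho> \<beta> :: "nat \<Rightarrow> real"
  assumes p: "prime p"
    and top: "\<forall>i<K. ts i < p \<and> tp i < p \<and> tp i \<noteq> ts i \<and> 0 \<le> g i (ts i) \<and>
      0 \<le> \<rho> i \<and> \<rho> i \<le> 1 \<and> g i (tp i) = g i (ts i) * \<rho> i"
    and ib: "inj_on ib {..<p - 1}" "ib ` {..<p - 1} \<subseteq> {..<K}"
    and \<beta>: "\<forall>j<p - 1. 0 \<le> \<beta> j \<and> \<beta> j \<le> max (\<rho> (ib j)) (1 / real p)"
    and H: "\<forall>t. (\<forall>i<K. t i < p) \<longrightarrow> (\<Prod>i<K. g i (t i)) \<le> H ((\<Sum>i<K. t i) mod p)"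
  shows "real p * (\<Prod>i<K. g i (ts i)) * (\<Prod>j<p - 1. \<beta> j) \<le> (\<Sum>s<p. H s)"
proof (rule sum_ge_of_subset_bounds[where w = "\<lambda>S. (\<Sum>i<K. if i \<in> ib ` S then tp i else ts i) mod p"])
  have p0: "0 < p" using p prime_gt_0_nat by blast
  show "\<forall>s<p. \<exists>S\<subseteq>{..<p - 1}. (\<Sum>i<K. if i \<in> ib ` S then tp i else ts i) mod p = s"
    using switched_sums_cover_residues[OF p _ ib] top by blast
  show "\<forall>S\<subseteq>{..<p - 1}. (\<Sum>i<K. if i \<in> ib ` S then tp i else ts i) mod p < p"
    using p0 by simp
  show "\<forall>S\<subseteq>{..<p - 1}. (\<Prod>i<K. g i (ts i)) * (\<Prod>j\<in>S. \<rho> (ib j))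
      \<le> H ((\<Sum>i<K. if i \<in> ib ` S then tp i else ts i) mod p)"
  proof (intro allI impI)
    fix S assume S: "S \<subseteq> {..<p - 1}"
    have "(\<Prod>i<K. g i (ts i)) * (\<Prod>j\<in>S. \<rho> (ib j)) = (\<Prod>i<K. g i (ts i)) * (\<Prod>i\<in>ib ` S. \<rho> i)"
      using inj_on_subset[OF ib(1) S] by (simp add: prod.reindex)
    also have "\<dots> = (\<Prod>i<K. if i \<in> ib ` S then g i (tp i) else g i (ts i))"
      using S ib(2) top by (intro prod_if_mem_eq[symmetric]) auto
    also have "\<dots> = (\<Prod>i<K. g i (if i \<in> ib ` S then tp i else ts i))"
      by (intro prod.cong) auto
    also have "\<dots> \<le> H ((\<Sum>i<K. if i \<in> ib ` S then tp i else ts i) mod p)"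
      using H top by simp
    finally show "(\<Prod>i<K. g i (ts i)) * (\<Prod>j\<in>S. \<rho> (ib j))
      \<le> H ((\<Sum>i<K. if i \<in> ib ` S then tp i else ts i) mod p)" .
  qed
  show "0 \<le> (\<Prod>i<K. g i (ts i))" using top by (intro prod_nonneg) auto
  show "\<forall>j<p - 1. 0 \<le> \<rho> (ib j) \<and> \<rho> (ib j) \<le> 1" using top ib(2) by auto
qed (use \<beta> in auto)

lemma fp_prekopa_leindler_if_atoms_bounded:
  fixes p M :: nat and c :: real and D :: "nat \<Rightarrow> real"
  assumes p: "prime p" "3 \<le> p" and c: "0 < c"
    and M: "M = nat \<lceil>2 * real p ^ 2 * ln (real p) / (c * pi ^ 2)\<rceil>"
    and D0: "\<forall>x<p. 0 \<le> D x" and D1: "(\<Sum>x<p. D x) = 1" and Dc: "\<forall>x<p. D x \<le> 1 - c"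
  shows "fp_prekopa_leindler p ((p - 1) * M) D"
  unfolding fp_prekopa_leindler_def
proof (intro allI impI)
  define K where "K = (p - 1) * M"
  fix g :: "nat \<Rightarrow> nat \<Rightarrow> real" and H :: "nat \<Rightarrow> real"
  assume g0: "\<forall>i<(p - 1) * M. \<forall>t<p. 0 \<le> g i t"
    and H: "\<forall>t. (\<forall>i<(p - 1) * M. t i < p) \<longrightarrow>
      (\<Prod>i<(p - 1) * M. g i (t i)) \<le> H ((\<Sum>i<(p - 1) * M. t i) mod p)"
  have "0 \<le> D 0" "D 0 \<le> 1 - c" using D0 Dc p(2) by auto
  then have c1: "c \<le> 1" by linarith
  have "0 < 2 * real p ^ 2 * ln (real p) / (c * pi ^ 2)" using p(2) c by simp
  then have M0: "0 < M" using M by simp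
  define \<phi> where "\<phi> x = 1 - c * (1 - x)" for x
  have \<phi>: "0 \<le> \<phi> x" if "0 \<le> x" "x \<le> 1" for x
    using mult_mono[of c 1 "1 - x" 1] that c c1 by (simp add: \<phi>_def)
  obtain ts tp \<rho> where top: "\<forall>i<K. ts i < p \<and> tp i < p \<and> tp i \<noteq> ts i \<and> 0 \<le> g i (ts i) \<and>
      0 \<le> \<rho> i \<and> \<rho> i \<le> 1 \<and> g i (tp i) = g i (ts i) * \<rho> i \<and>
      (\<Sum>t<p. D t * g i t) \<le> g i (ts i) * \<phi> (\<rho> i)"
    by (rule top_two_ratio_bounds[of p D c K g]) (use p(2) D0 D1 Dc g0 in \<open>auto simp: K_def \<phi>_def\<close>)
  obtain ib where ib: "inj_on ib {..<p - 1}" "ib ` {..<p - 1} \<subseteq> {..<K}"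
    "(\<Prod>i<K. \<phi> (\<rho> i)) \<le> (\<Prod>j<p - 1. \<phi> (\<rho> (ib j)) ^ M)"
    using prod_le_prod_block_max_power[of M "p - 1" "\<lambda>i. \<phi> (\<rho> i)"] M0 \<phi> top
    unfolding K_def by auto
  have "(\<Prod>i<K. \<Sum>t<p. D t * g i t) \<le> (\<Prod>i<K. g i (ts i) * \<phi> (\<rho> i))"
    using top D0 g0 by (intro prod_mono) (auto simp: K_def intro!: sum_nonneg)
  also have "\<dots> = (\<Prod>i<K. g i (ts i)) * (\<Prod>i<K. \<phi> (\<rho> i))" by (rule prod.distrib)
  also have "\<dots> \<le> (\<Prod>i<K. g i (ts i)) * (\<Prod>j<p - 1. \<phi> (\<rho> (ib j)) ^ M)"
    using ib(3) top by (intro mult_left_mono prod_nonneg) auto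
  finally have "real p * (\<Prod>i<K. \<Sum>t<p. D t * g i t)
      \<le> real p * (\<Prod>i<K. g i (ts i)) * (\<Prod>j<p - 1. \<phi> (\<rho> (ib j)) ^ M)"
    by (simp add: mult.assoc mult_left_mono)
  also have "\<dots> \<le> (\<Sum>s<p. H s)"
  proof (rule sum_ge_of_switching[OF p(1) _ ib(1,2)])
    show "\<forall>i<K. ts i < p \<and> tp i < p \<and> tp i \<noteq> ts i \<and> 0 \<le> g i (ts i) \<and>
      0 \<le> \<rho> i \<and> \<rho> i \<le> 1 \<and> g i (tp i) = g i (ts i) * \<rho> i" using top by blast
    show "\<forall>j<p - 1. 0 \<le> \<phi> (\<rho> (ib j)) ^ M \<and> \<phi> (\<rho> (ib j)) ^ M \<le> max (\<rho> (ib j)) (1 / real p)"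
      using power_affine_le_max_inverse[OF p(2) c c1 M] \<phi> top ib(2) by (auto simp: \<phi>_def)
  qed (use H in \<open>simp add: K_def\<close>)
  finally show "real p * (\<Prod>i<(p - 1) * M. \<Sum>t<p. D t * g i t) \<le> (\<Sum>s<p. H s)"
    by (simp add: K_def)
qed

section \<open>Tensorization\<close>

definition vec_sum :: "nat \<Rightarrow> nat \<Rightarrow> nat \<Rightarrow> (nat \<Rightarrow> nat \<Rightarrow> nat) \<Rightarrow> nat \<Rightarrow> nat" where
  "vec_sum p n K a = (\<lambda>j\<in>{..<n}. (\<Sum>i<K. a i j) mod p)"

definition sumset :: "nat \<Rightarrow> nat \<Rightarrow> nat \<Rightarrow> (nat \<Rightarrow> (nat \<Rightarrow> nat) set) \<Rightarrow> (nat \<Rightarrow> nat) set" where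
  "sumset p n K As = {vec_sum p n K a | a. \<forall>i<K. a i \<in> As i}"

lemma vec_sum_Suc: "vec_sum p n (Suc K) a = vadd p n (a K) (vec_sum p n K a)"
  unfolding vec_sum_def vadd_def by (rule ext) (simp add: mod_add_right_eq add.commute)

lemma sumset_Suc:
  "sumset p n (Suc K) As = {vadd p n x y | x y. x \<in> As K \<and> y \<in> sumset p n K As}"
proof (intro equalityI subsetI)
  fix z assume "z \<in> sumset p n (Suc K) As"
  then obtain a where a: "\<forall>i<Suc K. a i \<in> As i" "z = vadd p n (a K) (vec_sum p n K a)"
    unfolding sumset_def vec_sum_Suc by auto
  moreover have "vec_sum p n K a \<in> sumset p n K As" using a(1) unfolding sumset_def by auto
  ultimately show "z \<in> {vadd p n x y | x y. x \<in> As K \<and> y \<in> sumset p n K As}" by blast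
next
  fix z assume "z \<in> {vadd p n x y | x y. x \<in> As K \<and> y \<in> sumset p n K As}"
  then obtain x a where x: "x \<in> As K" and a: "\<forall>i<K. a i \<in> As i" "z = vadd p n x (vec_sum p n K a)"
    unfolding sumset_def by auto
  have "vec_sum p n K (a(K := x)) = vec_sum p n K a" unfolding vec_sum_def by simp
  then have "z = vec_sum p n (Suc K) (a(K := x))" using a(2) by (simp add: vec_sum_Suc)
  moreover have "\<forall>i<Suc K. (a(K := x)) i \<in> As i" using a(1) x by (simp add: less_Suc_eq)
  ultimately show "z \<in> sumset p n (Suc K) As" unfolding sumset_def by blast
qed

lemma ksumset_eq_sumset: "ksumset p n K A = sumset p n K (\<lambda>_. A)"
proof (induction K)
  case 0
  have "vec_sum p n 0 a = vzero n" for a unfolding vec_sum_def vzero_def by simp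
  then show ?case unfolding sumset_def by auto
next
  case (Suc K)
  then show ?case by (simp add: sumset_Suc)
qed

lemma finite_Fp_vecs: "finite (Fp_vecs p n)"
  unfolding Fp_vecs_def by (intro finite_PiE) auto

lemma sumset_subset_Fp_vecs:
  assumes "0 < p"
  shows "sumset p n K As \<subseteq> Fp_vecs p n"
proof
  fix x assume "x \<in> sumset p n K As"
  then obtain a where "x = vec_sum p n K a" unfolding sumset_def by blast
  then show "x \<in> Fp_vecs p n"
    unfolding vec_sum_def Fp_vecs_def using assms by (simp only: restrict_PiE_iff) simp
qed

lemma finite_sumset: "0 < p \<Longrightarrow> finite (sumset p n K As)"
  by (rule finite_subset[OF sumset_subset_Fp_vecs finite_Fp_vecs])

lemma prod_density_nonneg:
  assumes "\<forall>x<p. 0 \<le> D x" "A \<subseteq> Fp_vecs p n"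
  shows "0 \<le> prod_density n D A"
  unfolding prod_density_def
proof (intro sum_nonneg prod_nonneg)
  fix x i assume "x \<in> A" "i \<in> {..<n}"
  then have "x i < p" using assms(2) unfolding Fp_vecs_def by auto
  then show "0 \<le> D (x i)" using assms(1) by blast
qed

lemma prod_density_one: "prod_density n (\<lambda>_. 1) A = real (card A)"
  by (simp add: prod_density_def)

definition fibre :: "nat \<Rightarrow> (nat \<Rightarrow> nat) set \<Rightarrow> nat \<Rightarrow> (nat \<Rightarrow> nat) set" where
  "fibre n A t = (\<lambda>x. restrict x {..<n}) ` {x \<in> A. x n = t}"

lemma fibre_subset_Fp_vecs: "A \<subseteq> Fp_vecs p (Suc n) \<Longrightarrow> fibre n A t \<subseteq> Fp_vecs p n"
  unfolding fibre_def Fp_vecs_def by (auto simp: PiE_def Pi_def)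

lemma inj_on_restrict_fibre:
  assumes "A \<subseteq> Fp_vecs p (Suc n)"
  shows "inj_on (\<lambda>x. restrict x {..<n}) {x \<in> A. x n = t}"
proof (rule inj_onI)
  fix x y assume x: "x \<in> {x \<in> A. x n = t}" and y: "y \<in> {x \<in> A. x n = t}"
    and eq: "restrict x {..<n} = restrict y {..<n}"
  have "x \<in> {..<Suc n} \<rightarrow>\<^sub>E {..<p}" "y \<in> {..<Suc n} \<rightarrow>\<^sub>E {..<p}"
    using x y assms unfolding Fp_vecs_def by auto
  moreover have "x i = y i" if "i \<in> {..<Suc n}" for i
  proof (cases "i = n")
    case False
    then have "i < n" using that by simp
    then show ?thesis using fun_cong[OF eq, of i] by simp
  qed (use x y in simp)
  ultimately show "x = y" by (rule PiE_ext)
qed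

lemma prod_density_Suc:
  assumes A: "A \<subseteq> Fp_vecs p (Suc n)"
  shows "prod_density (Suc n) D A = (\<Sum>t<p. D t * prod_density n D (fibre n A t))"
proof -
  have "prod_density (Suc n) D A = (\<Sum>x\<in>A. D (x n) * (\<Prod>j<n. D (x j)))"
    unfolding prod_density_def by (simp add: mult.commute)
  also have "\<dots> = (\<Sum>t<p. \<Sum>x\<in>{x \<in> A. x n = t}. D (x n) * (\<Prod>j<n. D (x j)))"
    using A finite_subset[OF A finite_Fp_vecs]
    by (intro sum.group[symmetric]) (auto simp: Fp_vecs_def)
  also have "\<dots> = (\<Sum>t<p. D t * prod_density n D (fibre n A t))"
  proof (rule sum.cong)
    fix t
    have "(\<Sum>x\<in>{x \<in> A. x n = t}. D (x n) * (\<Prod>j<n. D (x j)))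
        = D t * (\<Sum>x\<in>{x \<in> A. x n = t}. \<Prod>j<n. D (restrict x {..<n} j))"
      by (simp add: sum_distrib_left)
    also have "\<dots> = D t * prod_density n D (fibre n A t)"
      unfolding prod_density_def fibre_def
      using sum.reindex[OF inj_on_restrict_fibre[OF A], of "\<lambda>x. \<Prod>j<n. D (x j)" t]
      by (simp add: comp_def)
    finally show "(\<Sum>x\<in>{x \<in> A. x n = t}. D (x n) * (\<Prod>j<n. D (x j)))
        = D t * prod_density n D (fibre n A t)" .
  qed simp
  finally show ?thesis .
qed

lemma card_eq_sum_card_fibre:
  assumes "S \<subseteq> Fp_vecs p (Suc n)"
  shows "real (card S) = (\<Sum>s<p. real (card (fibre n S s)))"
  using prod_density_Suc[OF assms, of "\<lambda>_. 1"] by (simp add: prod_density_one)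

lemma sumset_fibres_subset:
  "sumset p n K (\<lambda>i. fibre n (As i) (t i)) \<subseteq> fibre n (sumset p (Suc n) K As) ((\<Sum>i<K. t i) mod p)"
proof
  fix y assume "y \<in> sumset p n K (\<lambda>i. fibre n (As i) (t i))"
  then obtain b where b: "\<forall>i<K. b i \<in> fibre n (As i) (t i)" "y = vec_sum p n K b"
    unfolding sumset_def by auto
  have "\<forall>i\<in>{..<K}. \<exists>x. x \<in> As i \<and> x n = t i \<and> b i = restrict x {..<n}"
    using b(1) unfolding fibre_def by auto
  from bchoice[OF this] obtain a
    where a: "\<forall>i\<in>{..<K}. a i \<in> As i \<and> a i n = t i \<and> b i = restrict (a i) {..<n}"
    by blast
  have "vec_sum p (Suc n) K a \<in> sumset p (Suc n) K As" using a unfolding sumset_def by auto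
  moreover have "vec_sum p (Suc n) K a n = (\<Sum>i<K. t i) mod p" using a by (simp add: vec_sum_def)
  moreover have "restrict (vec_sum p (Suc n) K a) {..<n} = y"
    using a unfolding b(2) vec_sum_def by (auto intro!: sum.cong)
  ultimately show "y \<in> fibre n (sumset p (Suc n) K As) ((\<Sum>i<K. t i) mod p)"
    unfolding fibre_def by (intro image_eqI[of _ _ "vec_sum p (Suc n) K a"]) auto
qed

lemma card_sumset_dim0:
  assumes "\<forall>i<K. As i \<subseteq> Fp_vecs p 0"
  shows "(\<Prod>i<K. prod_density 0 D (As i)) \<le> real (card (sumset p 0 K As))"
proof (cases "\<exists>i<K. As i = {}")
  case True
  then obtain i where "i < K" "prod_density 0 D (As i) = 0" by (auto simp: prod_density_def)
  then have "(\<Prod>i<K. prod_density 0 D (As i)) = 0" by (auto simp: prod_zero_iff)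
  then show ?thesis by (simp del: prod_zero_iff)
next
  case False
  have Fp0: "Fp_vecs p 0 = {\<lambda>_. undefined}" unfolding Fp_vecs_def by simp
  then have As: "\<forall>i<K. As i = {\<lambda>_. undefined}"
    using assms False by (auto simp: subset_singleton_iff)
  have "vec_sum p 0 K a = (\<lambda>_. undefined)" for a unfolding vec_sum_def by auto
  then have "sumset p 0 K As = {\<lambda>_. undefined}"
    using As unfolding sumset_def by auto
  moreover have "prod_density 0 D {\<lambda>_. undefined} = 1" by (simp add: prod_density_def)
  ultimately show ?thesis using As by simp
qed

lemma card_sumset_ge:
  fixes p K :: nat and D :: "nat \<Rightarrow> real"
  assumes PL: "fp_prekopa_leindler p K D" and p: "0 < p" and D0: "\<forall>x<p. 0 \<le> D x"
    and "\<forall>i<K. As i \<subseteq> Fp_vecs p n"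
  shows "real p ^ n * (\<Prod>i<K. prod_density n D (As i)) \<le> real (card (sumset p n K As))"
  using assms(4)
proof (induction n arbitrary: As)
  case 0
  then show ?case using card_sumset_dim0 by simp
next
  case (Suc n)
  define S where "S = sumset p (Suc n) K As"
  define g where "g i t = prod_density n D (fibre n (As i) t)" for i t
  define H where "H s = real (card (fibre n S s)) / real p ^ n" for s
  have g0: "\<forall>i<K. \<forall>t<p. 0 \<le> g i t"
    using Suc.prems D0 fibre_subset_Fp_vecs prod_density_nonneg by (simp add: g_def)
  have "\<forall>t. (\<forall>i<K. t i < p) \<longrightarrow> (\<Prod>i<K. g i (t i)) \<le> H ((\<Sum>i<K. t i) mod p)"
  proof (intro allI impI)
    fix t :: "nat \<Rightarrow> nat"
    have "real p ^ n * (\<Prod>i<K. g i (t i)) \<le> real (card (sumset p n K (\<lambda>i. fibre n (As i) (t i))))"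
      unfolding g_def using Suc.IH[of "\<lambda>i. fibre n (As i) (t i)"] Suc.prems fibre_subset_Fp_vecs
      by simp
    also have "\<dots> \<le> real (card (fibre n S ((\<Sum>i<K. t i) mod p)))"
      unfolding S_def using sumset_fibres_subset finite_sumset[OF p]
      by (intro of_nat_mono card_mono) (auto simp: fibre_def)
    finally show "(\<Prod>i<K. g i (t i)) \<le> H ((\<Sum>i<K. t i) mod p)"
      unfolding H_def using p by (simp add: field_simps)
  qed
  then have PL_fibres: "real p * (\<Prod>i<K. \<Sum>t<p. D t * g i t) \<le> (\<Sum>s<p. H s)"
    using PL g0 unfolding fp_prekopa_leindler_def by blast
  have "(\<Prod>i<K. prod_density (Suc n) D (As i)) = (\<Prod>i<K. \<Sum>t<p. D t * g i t)"
    using Suc.prems by (intro prod.cong) (auto simp: g_def prod_density_Suc)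
  then have "real p ^ Suc n * (\<Prod>i<K. prod_density (Suc n) D (As i))
      = real p ^ n * (real p * (\<Prod>i<K. \<Sum>t<p. D t * g i t))" by simp
  also have "\<dots> \<le> real p ^ n * (\<Sum>s<p. H s)" using PL_fibres by (simp add: mult_left_mono)
  also have "\<dots> = real (card S)"
    using card_eq_sum_card_fibre[OF sumset_subset_Fp_vecs[OF p], of n K As] p
    by (simp add: S_def H_def sum_divide_distrib[symmetric])
  finally show ?case unfolding S_def .
qed

theorem proposition3p4:
  fixes p n M :: nat and c \<epsilon> :: real and D :: "nat \<Rightarrow> real" and A :: "(nat \<Rightarrow> nat) set"
  assumes "prime p" and "p \<ge> 3" and "c > 0"
    and "M = nat \<lceil>2 * real p ^ 2 * ln (real p) / (c * pi ^ 2)\<rceil>"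
    and "\<forall>x<p. D x \<ge> 0" and "(\<Sum>x<p. D x) = 1"
    and "\<forall>x<p. D x \<le> 1 - c"
    and "A \<subseteq> Fp_vecs p n"
    and "\<epsilon> = prod_density n D A"
  shows "unif_density p n (ksumset p n ((p - 1) * M) A) \<ge> \<epsilon> ^ ((p - 1) * M)"
proof -
  let ?K = "(p - 1) * M"
  have "fp_prekopa_leindler p ?K D"
    by (rule fp_prekopa_leindler_if_atoms_bounded[OF assms(1-7)])
  then have "real p ^ n * \<epsilon> ^ ?K \<le> real (card (ksumset p n ?K A))"
    using card_sumset_ge[of p ?K D "\<lambda>_. A" n] assms(2,5,8,9) by (simp add: ksumset_eq_sumset)
  then show ?thesis
    using assms(2) by (simp add: unif_density_def field_simps)
qed

end
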